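(* Let $G$ be a reaction network with one-dimensional stoichiometric subspace, $c^*$ a total-constant vector, and $q,\ell,\phi$ as below. If for a rate-constant vector $\kappa^*$, $x_1^*$ is a simple solution or a multiplicity-$(2N+1)$ solution ($N\in\mathbb Z_{>0}$) of $q(\kappa^*;x_1)=0$ and $\phi(\hat\kappa;x_1)$ is well-defined at $x_1^*$, then for every $\epsilon>0$ there exists $\delta\in\mathbb R$ such that for all $\delta'\in(0,|\delta|)$: (1) for $\kappa=(\kappa^*_1,\dots,\kappa^*_{\ell-1},\kappa^*_\ell+\mathrm{sign}(\delta)\delta',\kappa^*_{\ell+1},\dots,\kappa^*_m)$, the equation $q(\kappa;x_1)=0$ has a simple real solution $x_1^{(1)}$ with $0<x_1^{(1)}-x_1^*<\epsilon$; (2) for $\kappa=(\kappa^*_1,\dots,\kappa^*_{\ell-1},\kappa^*_\ell-\mathrm{sign}(\delta)\delta',\kappa^*_{\ell+1},\dots,\kappa^*_m)$, the equation $q(\kappa;x_1)=0$ has a simple real solution $x_1^{(2)}$ with $-\epsilon<x_1^{(2)}-x_1^*<0$.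
   Context: A reaction network $G$ has species $X_1,\dots,X_s$ and $m$ reactions $\sum_{i}\alpha_{ij}X_i\to\sum_i\beta_{ij}X_i$, $\alpha_{ij},\beta_{ij}\in\mathbb Z_{\ge0}$, $(\alpha_{1j},\dots,\alpha_{sj})\neq(\beta_{1j},\dots,\beta_{sj})$; its stoichiometric subspace is the span of the vectors $(\beta_{ij}-\alpha_{ij})_i$. Since it is one-dimensional, species are labelled so that $\beta_{11}-\alpha_{11}\ne0$, and there are $\lambda_j\ne0$ ($\lambda_1=1$) with $\beta_{ij}-\alpha_{ij}=\lambda_j(\beta_{i1}-\alpha_{i1})$. For a univariate polynomial $p$, $z^*$ is simple if $p(z^* )=0\neq p'(z^* )$, and a multiplicity-$N$ solution ($N\ge2$) if $p(z^* )=\dots=p^{(N-1)}(z^* )=0\ne p^{(N)}(z^* )$. Notation for $c^*\in\mathbb R^{s-1}$: $A_1=1,B_1=0$, $A_i=\frac{\beta_{i1}-\alpha_{i1}}{\beta_{11}-\alpha_{11}}$, $B_i=-\frac{c^*_{i-1}}{\beta_{11}-\alpha_{11}}$ ($i\ge2$). $[i]=\{k:A_k\ne0,B_k/A_k=B_i/A_i\}$ if $A_i\ne0$, $[i]=\{k:A_k=0\}$ otherwise; species labelled so that $1,\dots,r$ represent the $r$ distinct classes. $\varphi_k=\min_j\sum_{i\in[k]}\alpha_{ij}$, $\gamma_{kj}=\sum_{i\in[k]}\alpha_{ij}-\varphi_k$. $\mathcal J=\{i:A_i\ne0\}$, $\mathcal H=\{k\in\{1,\dots,r\}\cap\mathcal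 J:\gamma_{k1},\dots,\gamma_{km}\text{ not all equal}\}$ (with the standing labelling $1\in\mathcal H$ whenever $G$ has finitely many but at least one positive steady state in the class of $c^*$ for some rate constants). $I_i=(-B_i/A_i,+\infty)$ if $A_i>0$, $(0,+\infty)$ if $A_i=0$, $(0,-B_i/A_i)$ if $A_i<0$; $I=\bigcap_{k\in\mathcal H}I_k$; $\tau\in\mathcal H$ has $A_\tau>0$ and $-B_\tau/A_\tau$ equal to the left endpoint of $I$. $Y_i(x_1)=(A_ix_1+B_i)/|A_i|$ if $i\in\mathcal J$, $1$ otherwise; $\mathcal C_j=\prod_{i\in\mathcal J}|A_i|^{\alpha_{ij}}\prod_{i\notin\mathcal J}B_i^{\alpha_{ij}}$; $P_j(x_1)=\mathcal C_j\prod_{k\in\mathcal H}Y_k(x_1)^{\gamma_{kj}}$; $q(\kappa;x_1)=(\beta_{11}-\alpha_{11})\sum_{j=1}^m\lambda_j\kappa_jP_j(x_1)$; $\ell$ is an index $j$ minimizing $\gamma_{\tau j}$; $\hat\kappa=(\kappa_j)_{j\ne\ell}$, $\phi(\hat\kappa;x_1)=-\frac{\sum_{j\ne\ell}\lambda_j\kappa_jP_j(x_1)}{\lambda_\ell P_\ell(x_1)}$, well-defined at $z$ if $P_\ell(z)\ne0$. *)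

theory Defs
  imports "HOL-Computational_Algebra.Polynomial"
begin

text \<open>Reaction network data: species 1..s, reactions 1..m,
  reactant coefficients alpha i j, product coefficients beta i j (indices 1-based).
  c is the total-constant vector c* (entries c 1, ..., c (s-1)).\<close>

definition dstoich :: "(nat \<Rightarrow> nat \<Rightarrow> nat) \<Rightarrow> (nat \<Rightarrow> nat \<Rightarrow> nat) \<Rightarrow> nat \<Rightarrow> nat \<Rightarrow> real" where
  "dstoich \<alpha> \<beta> i j = real (\<beta> i j) - real (\<alpha> i j)"

definition Acoef :: "(nat \<Rightarrow> nat \<Rightarrow> nat) \<Rightarrow> (nat \<Rightarrow> nat \<Rightarrow> nat) \<Rightarrow> nat \<Rightarrow> real" where
  "Acoef \<alpha> \<beta> i = (if i = 1 then 1 else dstoich \<alpha> \<beta> i 1 / dstoich \<alpha> \<beta> 1 1)"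

definition Bcoef :: "(nat \<Rightarrow> nat \<Rightarrow> nat) \<Rightarrow> (nat \<Rightarrow> nat \<Rightarrow> nat) \<Rightarrow> (nat \<Rightarrow> real) \<Rightarrow> nat \<Rightarrow> real" where
  "Bcoef \<alpha> \<beta> c i = (if i = 1 then 0 else - c (i - 1) / dstoich \<alpha> \<beta> 1 1)"

definition cls :: "nat \<Rightarrow> (nat \<Rightarrow> nat \<Rightarrow> nat) \<Rightarrow> (nat \<Rightarrow> nat \<Rightarrow> nat) \<Rightarrow> (nat \<Rightarrow> real) \<Rightarrow> nat \<Rightarrow> nat set" where
  "cls s \<alpha> \<beta> c i =
     (if Acoef \<alpha> \<beta> i \<noteq> 0
      then {k \<in> {1..s}. Acoef \<alpha> \<beta> k \<noteq> 0 \<and>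
                Bcoef \<alpha> \<beta> c k / Acoef \<alpha> \<beta> k = Bcoef \<alpha> \<beta> c i / Acoef \<alpha> \<beta> i}
      else {k \<in> {1..s}. Acoef \<alpha> \<beta> k = 0})"

definition phiexp :: "nat \<Rightarrow> nat \<Rightarrow> (nat \<Rightarrow> nat \<Rightarrow> nat) \<Rightarrow> (nat \<Rightarrow> nat \<Rightarrow> nat) \<Rightarrow> (nat \<Rightarrow> real) \<Rightarrow> nat \<Rightarrow> nat" where
  "phiexp s m \<alpha> \<beta> c k = Min ((\<lambda>j. \<Sum>i\<in>cls s \<alpha> \<beta> c k. \<alpha> i j) ` {1..m})"

definition gam :: "nat \<Rightarrow> nat \<Rightarrow> (nat \<Rightarrow> nat \<Rightarrow> nat) \<Rightarrow> (nat \<Rightarrow> nat \<Rightarrow> nat) \<Rightarrow> (nat \<Rightarrow> real) \<Rightarrow> nat \<Rightarrow> nat \<Rightarrow> nat" where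
  "gam s m \<alpha> \<beta> c k j = (\<Sum>i\<in>cls s \<alpha> \<beta> c k. \<alpha> i j) - phiexp s m \<alpha> \<beta> c k"

definition Jset :: "nat \<Rightarrow> (nat \<Rightarrow> nat \<Rightarrow> nat) \<Rightarrow> (nat \<Rightarrow> nat \<Rightarrow> nat) \<Rightarrow> nat set" where
  "Jset s \<alpha> \<beta> = {i \<in> {1..s}. Acoef \<alpha> \<beta> i \<noteq> 0}"

definition Hset :: "nat \<Rightarrow> nat \<Rightarrow> nat \<Rightarrow> (nat \<Rightarrow> nat \<Rightarrow> nat) \<Rightarrow> (nat \<Rightarrow> nat \<Rightarrow> nat) \<Rightarrow> (nat \<Rightarrow> real) \<Rightarrow> nat set" where
  "Hset r s m \<alpha> \<beta> c = {k \<in> {1..r} \<inter> Jset s \<alpha> \<beta>.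
      \<not> (\<forall>j\<in>{1..m}. \<forall>j'\<in>{1..m}. gam s m \<alpha> \<beta> c k j = gam s m \<alpha> \<beta> c k j')}"

definition Iint :: "(nat \<Rightarrow> nat \<Rightarrow> nat) \<Rightarrow> (nat \<Rightarrow> nat \<Rightarrow> nat) \<Rightarrow> (nat \<Rightarrow> real) \<Rightarrow> nat \<Rightarrow> real set" where
  "Iint \<alpha> \<beta> c i =
     (if Acoef \<alpha> \<beta> i > 0 then {- Bcoef \<alpha> \<beta> c i / Acoef \<alpha> \<beta> i <..}
      else if Acoef \<alpha> \<beta> i = 0 then {0<..}
      else {0 <..< - Bcoef \<alpha> \<beta> c i / Acoef \<alpha> \<beta> i})"

definition Iall :: "nat \<Rightarrow> nat \<Rightarrow> nat \<Rightarrow> (nat \<Rightarrow> nat \<Rightarrow> nat) \<Rightarrow> (nat \<Rightarrow> nat \<Rightarrow> nat) \<Rightarrow> (nat \<Rightarrow> real) \<Rightarrow> real set" where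
  "Iall r s m \<alpha> \<beta> c = (\<Inter>k\<in>Hset r s m \<alpha> \<beta> c. Iint \<alpha> \<beta> c k)"

definition Ypoly :: "nat \<Rightarrow> (nat \<Rightarrow> nat \<Rightarrow> nat) \<Rightarrow> (nat \<Rightarrow> nat \<Rightarrow> nat) \<Rightarrow> (nat \<Rightarrow> real) \<Rightarrow> nat \<Rightarrow> real poly" where
  "Ypoly s \<alpha> \<beta> c i =
     (if i \<in> Jset s \<alpha> \<beta>
      then smult (1 / \<bar>Acoef \<alpha> \<beta> i\<bar>) [:Bcoef \<alpha> \<beta> c i, Acoef \<alpha> \<beta> i:]
      else 1)"

definition Ccoef :: "nat \<Rightarrow> (nat \<Rightarrow> nat \<Rightarrow> nat) \<Rightarrow> (nat \<Rightarrow> nat \<Rightarrow> nat) \<Rightarrow> (nat \<Rightarrow> real) \<Rightarrow> nat \<Rightarrow> real" where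
  "Ccoef s \<alpha> \<beta> c j =
     (\<Prod>i\<in>Jset s \<alpha> \<beta>. \<bar>Acoef \<alpha> \<beta> i\<bar> ^ \<alpha> i j) *
     (\<Prod>i\<in>{1..s} - Jset s \<alpha> \<beta>. Bcoef \<alpha> \<beta> c i ^ \<alpha> i j)"

definition Ppoly :: "nat \<Rightarrow> nat \<Rightarrow> nat \<Rightarrow> (nat \<Rightarrow> nat \<Rightarrow> nat) \<Rightarrow> (nat \<Rightarrow> nat \<Rightarrow> nat) \<Rightarrow> (nat \<Rightarrow> real) \<Rightarrow> nat \<Rightarrow> real poly" where
  "Ppoly r s m \<alpha> \<beta> c j =
     smult (Ccoef s \<alpha> \<beta> c j)
       (\<Prod>k\<in>Hset r s m \<alpha> \<beta> c. Ypoly s \<alpha> \<beta> c k ^ gam s m \<alpha> \<beta> c k j)"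

definition qpoly :: "nat \<Rightarrow> nat \<Rightarrow> nat \<Rightarrow> (nat \<Rightarrow> nat \<Rightarrow> nat) \<Rightarrow> (nat \<Rightarrow> nat \<Rightarrow> nat) \<Rightarrow> (nat \<Rightarrow> real) \<Rightarrow> (nat \<Rightarrow> real) \<Rightarrow> (nat \<Rightarrow> real) \<Rightarrow> real poly" where
  "qpoly r s m \<alpha> \<beta> c lam \<kappa> =
     smult (dstoich \<alpha> \<beta> 1 1) (\<Sum>j\<in>{1..m}. smult (lam j * \<kappa> j) (Ppoly r s m \<alpha> \<beta> c j))"

definition simple_sol :: "real poly \<Rightarrow> real \<Rightarrow> bool" where
  "simple_sol p z \<longleftrightarrow> poly p z = 0 \<and> poly (pderiv p) z \<noteq> 0"

definition mult_sol :: "nat \<Rightarrow> real poly \<Rightarrow> real \<Rightarrow> bool" where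
  "mult_sol N p z \<longleftrightarrow> 2 \<le> N \<and> (\<forall>k<N. poly ((pderiv ^^ k) p) z = 0) \<and> poly ((pderiv ^^ N) p) z \<noteq> 0"

end

theory Submission
  imports Defs "HOL-Analysis.Analysis"
begin

text \<open>Perturbing \<open>\<kappa>\<^sub>\<ell>\<close> by \<open>t\<close> turns \<open>q(\<kappa>\<^sup>*; x\<^sub>1)\<close> into \<open>Q + t R\<close> with
  \<open>R = (\<beta>\<^sub>1\<^sub>1 - \<alpha>\<^sub>1\<^sub>1) \<lambda>\<^sub>\<ell> P\<^sub>\<ell>\<close>, and \<open>R(x\<^sub>1\<^sup>*) \<noteq> 0\<close>. Near \<open>x\<^sub>1\<^sup>*\<close> the roots of
  \<open>Q + t R\<close> are thus the solutions of \<open>\<phi> = t\<close> for \<open>\<phi> = -Q/R\<close>. Since \<open>x\<^sub>1\<^sup>*\<close> is a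
  root of \<open>Q\<close> of odd order, \<open>\<phi>\<close> changes sign at \<open>x\<^sub>1\<^sup>*\<close>, so by the intermediate value
  theorem every small \<open>t\<close> of one sign is attained to the right of \<open>x\<^sub>1\<^sup>*\<close> and \<open>-t\<close> to
  the left. These roots are simple because the Wronskian \<open>Q R' - Q' R\<close> vanishes near
  \<open>x\<^sub>1\<^sup>*\<close> only at \<open>x\<^sub>1\<^sup>*\<close> itself. Of the hypotheses, only those on
  \<open>\<beta>\<^sub>1\<^sub>1 - \<alpha>\<^sub>1\<^sub>1\<close>, \<open>\<lambda>\<^sub>\<ell>\<close>, \<open>x\<^sub>1\<^sup>*\<close> and \<open>P\<^sub>\<ell>(x\<^sub>1\<^sup>*)\<close> are used.\<close>

lemma order_eq_first_nonzero_higher_pderiv: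
  fixes p :: "'a::{idom,semiring_char_0} poly"
  assumes "\<forall>k<n. poly ((pderiv ^^ k) p) x = 0" and "poly ((pderiv ^^ n) p) x \<noteq> 0"
  shows "order x p = n"
  using assms
proof (induction n arbitrary: p)
  case 0
  then show ?case by (auto simp: order_root)
next
  case (Suc n)
  have "order x (pderiv p) = n"
    using Suc.prems by (intro Suc.IH) (auto simp del: funpow.simps simp: funpow_Suc_right)
  moreover have "p \<noteq> 0"
    using Suc.prems(2) by auto
  moreover have "poly p x = 0"
    using Suc.prems(1) by (metis funpow_0 zero_less_Suc)
  ultimately show ?case
    by (simp add: order_pderiv)
qed

lemma order_simple_sol: "simple_sol p x \<Longrightarrow> order x p = 1"
  by (rule order_eq_first_nonzero_higher_pderiv) (auto simp: simple_sol_def)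

lemma order_mult_sol: "mult_sol N p x \<Longrightarrow> order x p = N"
  by (rule order_eq_first_nonzero_higher_pderiv) (auto simp: mult_sol_def)

definition wronskian :: "'a::idom poly \<Rightarrow> 'a poly \<Rightarrow> 'a poly" where
  "wronskian p q = p * pderiv q - pderiv p * q"

lemma wronskian_linear_power_mult:
  fixes g R :: "'a::idom poly"
  shows "wronskian ([:-a, 1:] ^ Suc k * g) R
    = [:-a, 1:] ^ k * ([:-a, 1:] * wronskian g R - smult (of_nat (Suc k)) (g * R))"
proof -
  define L where "L = [:-a, 1:]"
  have "pderiv (L ^ Suc k) = smult (of_nat (Suc k)) (L ^ k)"
    unfolding L_def by (simp add: pderiv_power pderiv_pCons del: power_Suc)
  then show ?thesis
    unfolding L_def[symmetric] wronskian_def pderiv_mult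
    by (simp add: algebra_simps del: power_Suc) (simp add: algebra_simps)
qed

lemma simple_sol_add_smultI:
  assumes "poly R y \<noteq> 0" and "poly Q y + t * poly R y = 0"
    and "poly (wronskian Q R) y \<noteq> 0"
  shows "simple_sol (Q + smult t R) y"
proof -
  have Q: "poly Q y = - (t * poly R y)"
    using assms(2) by (simp add: eq_neg_iff_add_eq_0)
  have "(poly (pderiv Q) y + t * poly (pderiv R) y) * poly R y
      = poly (pderiv Q) y * poly R y - poly Q y * poly (pderiv R) y"
    unfolding Q by (simp add: algebra_simps)
  also have "\<dots> = - poly (wronskian Q R) y"
    by (simp add: wronskian_def)
  finally have "poly (pderiv Q) y + t * poly (pderiv R) y \<noteq> 0"
    using assms(3) assms(1) by auto
  then show ?thesis
    using assms(2) by (simp add: simple_sol_def pderiv_add pderiv_smult)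
qed

lemma IVT_strict:
  fixes f :: "real \<Rightarrow> real"
  assumes "u \<le> v" and "continuous_on {u..v} f"
    and "min (f u) (f v) < t" and "t < max (f u) (f v)"
  shows "\<exists>x. u < x \<and> x < v \<and> f x = t"
proof -
  obtain x where "u \<le> x" "x \<le> v" "f x = t"
    using IVT'[of f u t v] IVT2'[of f v t u] assms by (cases "f u \<le> f v") auto
  moreover have "x \<noteq> u" "x \<noteq> v"
    using \<open>f x = t\<close> assms(3,4) by auto
  ultimately show ?thesis
    by (intro exI[of _ x]) auto
qed

lemma sign_change_small_values:
  fixes \<phi> :: "real \<Rightarrow> real"
  assumes "0 < e" and cont: "continuous_on {x - e..x + e} \<phi>" and "\<phi> x = 0"
    and opposite: "\<phi> (x + e) * \<phi> (x - e) < 0"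
  shows "\<exists>\<delta>. \<delta> \<noteq> 0 \<and> (\<forall>d. 0 < d \<and> d < \<bar>\<delta>\<bar> \<longrightarrow>
           (\<exists>x1. x < x1 \<and> x1 < x + e \<and> \<phi> x1 = sgn \<delta> * d) \<and>
           (\<exists>x2. x - e < x2 \<and> x2 < x \<and> \<phi> x2 = - (sgn \<delta> * d)))"
proof -
  define \<delta> where "\<delta> = sgn (\<phi> (x + e)) * min \<bar>\<phi> (x + e)\<bar> \<bar>\<phi> (x - e)\<bar>"
  have sgn_right: "sgn (\<phi> (x + e)) = sgn \<delta>" and sgn_left: "sgn (\<phi> (x - e)) = - sgn \<delta>"
    and abs_\<delta>: "\<bar>\<delta>\<bar> \<le> \<bar>\<phi> (x + e)\<bar>" "\<bar>\<delta>\<bar> \<le> \<bar>\<phi> (x - e)\<bar>"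
    using opposite by (auto simp: \<delta>_def sgn_if abs_mult mult_less_0_iff)
  have "\<delta> \<noteq> 0"
    using opposite sgn_right by (metis mult_zero_left order_less_irrefl sgn_0 sgn_eq_0_iff)
  moreover have "(\<exists>x1. x < x1 \<and> x1 < x + e \<and> \<phi> x1 = sgn \<delta> * d) \<and>
      (\<exists>x2. x - e < x2 \<and> x2 < x \<and> \<phi> x2 = - (sgn \<delta> * d))" if d: "0 < d" "d < \<bar>\<delta>\<bar>" for d
  proof
    have "continuous_on {x..x + e} \<phi>"
      using cont by (rule continuous_on_subset) auto
    moreover have "min (\<phi> x) (\<phi> (x + e)) < sgn \<delta> * d" "sgn \<delta> * d < max (\<phi> x) (\<phi> (x + e))"
      using sgn_right abs_\<delta> d \<open>\<phi> x = 0\<close> by (auto simp: sgn_if split: if_splits)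
    ultimately show "\<exists>x1. x < x1 \<and> x1 < x + e \<and> \<phi> x1 = sgn \<delta> * d"
      using IVT_strict[of x "x + e" \<phi>] \<open>0 < e\<close> by auto
  next
    have "continuous_on {x - e..x} \<phi>"
      using cont by (rule continuous_on_subset) auto
    moreover have "min (\<phi> (x - e)) (\<phi> x) < - (sgn \<delta> * d)" "- (sgn \<delta> * d) < max (\<phi> (x - e)) (\<phi> x)"
      using sgn_left abs_\<delta> d \<open>\<phi> x = 0\<close> by (auto simp: sgn_if split: if_splits)
    ultimately show "\<exists>x2. x - e < x2 \<and> x2 < x \<and> \<phi> x2 = - (sgn \<delta> * d)"
      using IVT_strict[of "x - e" x \<phi>] \<open>0 < e\<close> by auto
  qed
  ultimately show ?thesis
    by blast
qed

lemma eventually_wronskian_nonzero_at_root: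
  fixes Q R :: "real poly"
  assumes "Q \<noteq> 0" and "poly Q x = 0" and R: "poly R x \<noteq> 0"
  shows "\<forall>\<^sub>F y in at x. poly (wronskian Q R) y \<noteq> 0"
proof -
  obtain k where k: "order x Q = Suc k"
    using assms(1,2) by (cases "order x Q") (auto simp: order_root)
  obtain g where Q: "Q = [:-x, 1:] ^ Suc k * g" and g: "poly g x \<noteq> 0"
    using order_decomp[OF \<open>Q \<noteq> 0\<close>, of x] k by (auto simp: poly_eq_0_iff_dvd)
  define V where "V = [:-x, 1:] * wronskian g R - smult (of_nat (Suc k)) (g * R)"
  have W: "wronskian Q R = [:-x, 1:] ^ k * V"
    unfolding Q V_def by (rule wronskian_linear_power_mult)
  have "poly V x \<noteq> 0"
    using g R by (simp add: V_def)
  then have "\<forall>\<^sub>F y in at x. poly V y \<noteq> 0"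
    using poly_isCont[where p = V] by (intro tendsto_imp_eventually_ne) (auto simp: isCont_def)
  moreover have "\<forall>\<^sub>F y in at x. y \<noteq> x"
    by (simp add: eventually_at_filter)
  ultimately show ?thesis
    by eventually_elim (simp add: W poly_power)
qed

lemma odd_order_root_sign_change:
  fixes Q R :: "real poly"
  assumes "Q \<noteq> 0" and "odd (order x Q)" and R: "poly R x \<noteq> 0"
  shows "\<exists>\<eta>>0. \<forall>e. 0 < e \<and> e < \<eta> \<longrightarrow>
           poly Q (x + e) / poly R (x + e) * (poly Q (x - e) / poly R (x - e)) < 0"
proof -
  obtain k where k: "order x Q = Suc k"
    using \<open>odd (order x Q)\<close> by (cases "order x Q") auto
  obtain g where Q: "Q = [:-x, 1:] ^ Suc k * g" and g: "poly g x \<noteq> 0"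
    using order_decomp[OF \<open>Q \<noteq> 0\<close>, of x] k by (auto simp: poly_eq_0_iff_dvd)
  define h where "h y = poly g y / poly R y" for y
  have "isCont h x"
    unfolding h_def using R by (intro continuous_intros) auto
  then have "((\<lambda>y. h y * h x) \<longlongrightarrow> h x * h x) (at x)"
    by (intro tendsto_intros) (simp add: isCont_def)
  moreover have "0 < h x * h x"
    using g R unfolding h_def by (metis divide_eq_0_iff not_real_square_gt_zero)
  ultimately have "\<forall>\<^sub>F y in at x. 0 < h y * h x"
    by (rule order_tendstoD(1))
  then obtain \<eta> where "0 < \<eta>" and \<eta>: "\<And>y. y \<noteq> x \<Longrightarrow> dist y x < \<eta> \<Longrightarrow> 0 < h y * h x"
    unfolding eventually_at by blast
  have "poly Q y / poly R y = (y - x) ^ Suc k * h y" for y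
    unfolding Q h_def by (simp add: poly_power del: power_Suc)
  moreover have "0 < h (x + e) * h (x - e)" if "0 < e" "e < \<eta>" for e
  proof -
    have "0 < (h (x + e) * h x) * (h (x - e) * h x)"
      using \<eta>[of "x + e"] \<eta>[of "x - e"] that by (simp add: dist_real_def)
    then show ?thesis
      by (simp add: zero_less_mult_iff) (metis mult_less_0_iff not_square_less_zero)
  qed
  ultimately show ?thesis
    using \<open>0 < \<eta>\<close> \<open>odd (order x Q)\<close> k
    by (intro exI[of _ \<eta>]) (auto simp: power_minus_odd mult_less_0_iff zero_less_mult_iff)
qed

lemma odd_order_root_perturbation:
  fixes Q R :: "real poly"
  assumes "Q \<noteq> 0" and "odd (order x Q)" and R: "poly R x \<noteq> 0"
  shows "\<forall>\<epsilon>>0. \<exists>\<delta>. \<delta> \<noteq> 0 \<and> (\<forall>\<delta>'. 0 < \<delta>' \<and> \<delta>' < \<bar>\<delta>\<bar> \<longrightarrow>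
           (\<exists>x1. simple_sol (Q + smult (sgn \<delta> * \<delta>') R) x1 \<and> 0 < x1 - x \<and> x1 - x < \<epsilon>) \<and>
           (\<exists>x2. simple_sol (Q + smult (- (sgn \<delta> * \<delta>')) R) x2 \<and> - \<epsilon> < x2 - x \<and> x2 - x < 0))"
proof (intro allI impI)
  fix \<epsilon> :: real
  assume "0 < \<epsilon>"
  have "poly Q x = 0"
    using assms(1,2) by (simp add: order_root odd_pos)
  then have "\<forall>\<^sub>F y in at x. poly R y \<noteq> 0 \<and> poly (wronskian Q R) y \<noteq> 0"
    using R poly_isCont[where p = R] assms(1)
    by (intro eventually_conj tendsto_imp_eventually_ne eventually_wronskian_nonzero_at_root)
      (auto simp: isCont_def)
  then obtain \<eta>\<^sub>1 where "0 < \<eta>\<^sub>1" and near: "\<And>y. y \<noteq> x \<Longrightarrow> dist y x < \<eta>\<^sub>1 \<Longrightarrow>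
      poly R y \<noteq> 0 \<and> poly (wronskian Q R) y \<noteq> 0"
    unfolding eventually_at by blast
  obtain \<eta>\<^sub>2 where "0 < \<eta>\<^sub>2" and sign_change: "\<And>e. 0 < e \<Longrightarrow> e < \<eta>\<^sub>2 \<Longrightarrow>
      poly Q (x + e) / poly R (x + e) * (poly Q (x - e) / poly R (x - e)) < 0"
    using odd_order_root_sign_change[OF assms] by blast
  define e where "e = Min {\<eta>\<^sub>1, \<eta>\<^sub>2, \<epsilon>} / 2"
  have "0 < e" "e < \<eta>\<^sub>1" "e < \<eta>\<^sub>2" "e < \<epsilon>"
    using \<open>0 < \<eta>\<^sub>1\<close> \<open>0 < \<eta>\<^sub>2\<close> \<open>0 < \<epsilon>\<close> by (auto simp: e_def)
  define \<phi> where "\<phi> y = - poly Q y / poly R y" for y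
  have "poly R y \<noteq> 0" if "y \<in> {x - e..x + e}" for y
    using near[of y] R that \<open>e < \<eta>\<^sub>1\<close> by (cases "y = x") (auto simp: dist_real_def abs_less_iff)
  then have "continuous_on {x - e..x + e} \<phi>"
    unfolding \<phi>_def by (intro continuous_intros) auto
  moreover have "\<phi> (x + e) * \<phi> (x - e) < 0"
    using sign_change[OF \<open>0 < e\<close> \<open>e < \<eta>\<^sub>2\<close>] by (simp add: \<phi>_def)
  moreover have "\<phi> x = 0"
    using \<open>poly Q x = 0\<close> by (simp add: \<phi>_def)
  ultimately obtain \<delta> where "\<delta> \<noteq> 0" and \<delta>: "\<And>d. 0 < d \<Longrightarrow> d < \<bar>\<delta>\<bar> \<Longrightarrow>
      (\<exists>x1. x < x1 \<and> x1 < x + e \<and> \<phi> x1 = sgn \<delta> * d) \<and>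
      (\<exists>x2. x - e < x2 \<and> x2 < x \<and> \<phi> x2 = - (sgn \<delta> * d))"
    using sign_change_small_values[of e x \<phi>] \<open>0 < e\<close> by blast
  have simple: "simple_sol (Q + smult t R) y" if "y \<noteq> x" "\<bar>y - x\<bar> < e" "\<phi> y = t" for y t
    using near[of y] that \<open>e < \<eta>\<^sub>1\<close>
    by (intro simple_sol_add_smultI) (auto simp: \<phi>_def dist_real_def)
  show "\<exists>\<delta>. \<delta> \<noteq> 0 \<and> (\<forall>\<delta>'. 0 < \<delta>' \<and> \<delta>' < \<bar>\<delta>\<bar> \<longrightarrow>
           (\<exists>x1. simple_sol (Q + smult (sgn \<delta> * \<delta>') R) x1 \<and> 0 < x1 - x \<and> x1 - x < \<epsilon>) \<and>
           (\<exists>x2. simple_sol (Q + smult (- (sgn \<delta> * \<delta>')) R) x2 \<and> - \<epsilon> < x2 - x \<and> x2 - x < 0))"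
  proof (rule exI[of _ \<delta>], intro conjI allI impI)
    fix d
    assume "0 < d \<and> d < \<bar>\<delta>\<bar>"
    then obtain x1 x2 where x1: "x < x1" "x1 < x + e" "\<phi> x1 = sgn \<delta> * d"
      and x2: "x - e < x2" "x2 < x" "\<phi> x2 = - (sgn \<delta> * d)"
      using \<delta> by blast
    show "\<exists>x1. simple_sol (Q + smult (sgn \<delta> * d) R) x1 \<and> 0 < x1 - x \<and> x1 - x < \<epsilon>"
      using x1 simple[of x1] \<open>e < \<epsilon>\<close> by (intro exI[of _ x1]) auto
    show "\<exists>x2. simple_sol (Q + smult (- (sgn \<delta> * d)) R) x2 \<and> - \<epsilon> < x2 - x \<and> x2 - x < 0"
      using x2 simple[of x2] \<open>e < \<epsilon>\<close> by (intro exI[of _ x2]) auto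
  qed (use \<open>\<delta> \<noteq> 0\<close> in simp)
qed

lemma qpoly_fun_upd_add:
  assumes "ell \<in> {1..m}"
  shows "qpoly r s m \<alpha> \<beta> c lam (\<kappa>(ell := \<kappa> ell + t))
    = qpoly r s m \<alpha> \<beta> c lam \<kappa>
      + smult t (smult (dstoich \<alpha> \<beta> 1 1 * lam ell) (Ppoly r s m \<alpha> \<beta> c ell))"
proof -
  let ?P = "Ppoly r s m \<alpha> \<beta> c"
  have "(\<Sum>j\<in>{1..m}. smult (lam j * (\<kappa>(ell := \<kappa> ell + t)) j) (?P j))
      = (\<Sum>j\<in>{1..m}. smult (lam j * \<kappa> j) (?P j)
          + (if j = ell then smult (lam ell * t) (?P ell) else 0))"
    by (rule sum.cong) (auto simp: algebra_simps smult_add_left)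
  also have "\<dots> = (\<Sum>j\<in>{1..m}. smult (lam j * \<kappa> j) (?P j)) + smult (lam ell * t) (?P ell)"
    using assms by (simp add: sum.distrib)
  finally show ?thesis
    unfolding qpoly_def by (simp add: smult_add_right algebra_simps)
qed

theorem lemma6p4:
  fixes s m r :: nat and \<alpha> \<beta> :: "nat \<Rightarrow> nat \<Rightarrow> nat" and lam :: "nat \<Rightarrow> real"
    and c :: "nat \<Rightarrow> real" and \<kappa>s :: "nat \<Rightarrow> real" and xs :: real
    and \<tau> ell :: nat
  assumes s_pos: "1 \<le> s" and m_pos: "1 \<le> m"
    and reac: "\<forall>j\<in>{1..m}. \<exists>i\<in>{1..s}. \<alpha> i j \<noteq> \<beta> i j"
    and d11: "\<beta> 1 1 \<noteq> \<alpha> 1 1"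
    and lam1: "lam 1 = 1"
    and lam_nz: "\<forall>j\<in>{1..m}. lam j \<noteq> 0"
    and lam: "\<forall>i\<in>{1..s}. \<forall>j\<in>{1..m}. dstoich \<alpha> \<beta> i j = lam j * dstoich \<alpha> \<beta> i 1"
    and r_range: "1 \<le> r" "r \<le> s"
    and reps_distinct: "\<forall>i\<in>{1..r}. \<forall>k\<in>{1..r}. i \<noteq> k \<longrightarrow> k \<notin> cls s \<alpha> \<beta> c i"
    and reps_cover: "\<forall>i\<in>{1..s}. \<exists>k\<in>{1..r}. i \<in> cls s \<alpha> \<beta> c k"
    and tau: "\<tau> \<in> Hset r s m \<alpha> \<beta> c" "Acoef \<alpha> \<beta> \<tau> > 0"
      "Iall r s m \<alpha> \<beta> c \<noteq> {}"
      "- Bcoef \<alpha> \<beta> c \<tau> / Acoef \<alpha> \<beta> \<tau> = Inf (Iall r s m \<alpha> \<beta> c)"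
    and hell: "ell \<in> {1..m}" "\<forall>j\<in>{1..m}. gam s m \<alpha> \<beta> c \<tau> ell \<le> gam s m \<alpha> \<beta> c \<tau> j"
    and kappa_pos: "\<forall>j\<in>{1..m}. \<kappa>s j > 0"
    and sol: "simple_sol (qpoly r s m \<alpha> \<beta> c lam \<kappa>s) xs \<or>
              (\<exists>N::nat. N > 0 \<and> mult_sol (2 * N + 1) (qpoly r s m \<alpha> \<beta> c lam \<kappa>s) xs)"
    and welldef: "poly (Ppoly r s m \<alpha> \<beta> c ell) xs \<noteq> 0"
  shows "\<forall>\<epsilon>>0. \<exists>\<delta>::real. \<delta> \<noteq> 0 \<and> (\<forall>\<delta>'. 0 < \<delta>' \<and> \<delta>' < \<bar>\<delta>\<bar> \<longrightarrow>
           (\<exists>x1. simple_sol (qpoly r s m \<alpha> \<beta> c lam (\<kappa>s(ell := \<kappa>s ell + sgn \<delta> * \<delta>'))) x1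
                 \<and> 0 < x1 - xs \<and> x1 - xs < \<epsilon>) \<and>
           (\<exists>x2. simple_sol (qpoly r s m \<alpha> \<beta> c lam (\<kappa>s(ell := \<kappa>s ell - sgn \<delta> * \<delta>'))) x2
                 \<and> - \<epsilon> < x2 - xs \<and> x2 - xs < 0))"
proof -
  let ?Q = "qpoly r s m \<alpha> \<beta> c lam \<kappa>s"
  let ?R = "smult (dstoich \<alpha> \<beta> 1 1 * lam ell) (Ppoly r s m \<alpha> \<beta> c ell)"
  have "poly ?R xs \<noteq> 0"
    using d11 lam_nz hell(1) welldef by (simp add: dstoich_def)
  moreover have "?Q \<noteq> 0"
    using sol by (auto simp: simple_sol_def mult_sol_def)
  moreover have "odd (order xs ?Q)"
    using sol order_simple_sol order_mult_sol by fastforce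
  ultimately show ?thesis
    using odd_order_root_perturbation[of ?Q xs ?R]
    by (simp add: qpoly_fun_upd_add[OF hell(1)] diff_conv_add_uminus del: add_uminus_conv_diff)
qed

end
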